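(* Let $G$ be a connected threshold graph with minimum degree $\delta(G)\ge 3$. Then $px_3(G)\le 3$. Moreover, the bound is tight: for every integer $r\ge 2\cdot 2^3+1=17$, the threshold graph $rK_1\vee K_3$ satisfies $px_3(rK_1\vee K_3)=3$.
   Context: All graphs are finite, simple and undirected. A graph $G$ is a threshold graph if there are a weight function $w:V(G)\to\mathbb{R}$ and a real $t$ such that distinct $u,v$ are adjacent iff $w(u)+w(v)\ge t$. $rK_1$ is the edgeless graph on $r$ vertices and $G\vee H$ is the join (disjoint union plus all edges between $G$ and $H$). An edge-coloring assigns colors to edges, adjacent edges being allowed to share a color. A tree in an edge-colored graph is proper if no two adjacent edges of it receive the same color. An edge-coloring of $G$ is a $3$-proper coloring if for every $3$-element set $S\subseteq V(G)$ there is a proper tree in $G$ containing all vertices of $S$; $px_3(G)$ is the minimum number of colors in a $3$-proper coloring of $G$. *)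

theory Defs
  imports Complex_Main
begin

definition simple_graph :: "'a set \<Rightarrow> 'a set set \<Rightarrow> bool" where
  "simple_graph V E \<longleftrightarrow> finite V \<and> (\<forall>e\<in>E. \<exists>u v. u \<in> V \<and> v \<in> V \<and> u \<noteq> v \<and> e = {u, v})"

definition adj_rel :: "'a set \<Rightarrow> 'a set set \<Rightarrow> ('a \<times> 'a) set" where
  "adj_rel V E = {(u, v). u \<in> V \<and> v \<in> V \<and> {u, v} \<in> E}"

definition graph_connected :: "'a set \<Rightarrow> 'a set set \<Rightarrow> bool" where
  "graph_connected V E \<longleftrightarrow> V \<noteq> {} \<and> (\<forall>u\<in>V. \<forall>v\<in>V. (u, v) \<in> (adj_rel V E)\<^sup>*)"

definition degree :: "'a set \<Rightarrow> 'a set set \<Rightarrow> 'a \<Rightarrow> nat" where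
  "degree V E v = card {u \<in> V. {u, v} \<in> E}"

definition min_degree_ge :: "'a set \<Rightarrow> 'a set set \<Rightarrow> nat \<Rightarrow> bool" where
  "min_degree_ge V E d \<longleftrightarrow> (\<forall>v\<in>V. d \<le> degree V E v)"

definition threshold_graph :: "'a set \<Rightarrow> 'a set set \<Rightarrow> bool" where
  "threshold_graph V E \<longleftrightarrow> simple_graph V E \<and>
     (\<exists>(w :: 'a \<Rightarrow> real) t. \<forall>u\<in>V. \<forall>v\<in>V. u \<noteq> v \<longrightarrow> ({u, v} \<in> E \<longleftrightarrow> w u + w v \<ge> t))"

definition has_cycle :: "'a set \<Rightarrow> 'a set set \<Rightarrow> bool" where
  "has_cycle V E \<longleftrightarrow> (\<exists>vs. length vs \<ge> 3 \<and> distinct vs \<and> set vs \<subseteq> V \<and>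
      (\<forall>i < length vs. {vs ! i, vs ! ((i + 1) mod length vs)} \<in> E))"

definition is_tree_in :: "'a set \<Rightarrow> 'a set set \<Rightarrow> 'a set \<Rightarrow> 'a set set \<Rightarrow> bool" where
  "is_tree_in V E VT ET \<longleftrightarrow> VT \<subseteq> V \<and> ET \<subseteq> E \<and> (\<forall>e\<in>ET. e \<subseteq> VT) \<and>
     graph_connected VT ET \<and> \<not> has_cycle VT ET"

definition proper_edges :: "('a set \<Rightarrow> nat) \<Rightarrow> 'a set set \<Rightarrow> bool" where
  "proper_edges c ET \<longleftrightarrow> (\<forall>e\<in>ET. \<forall>f\<in>ET. e \<noteq> f \<and> e \<inter> f \<noteq> {} \<longrightarrow> c e \<noteq> c f)"

definition three_proper_coloring :: "'a set \<Rightarrow> 'a set set \<Rightarrow> ('a set \<Rightarrow> nat) \<Rightarrow> bool" where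
  "three_proper_coloring V E c \<longleftrightarrow>
     (\<forall>S \<subseteq> V. card S = 3 \<longrightarrow>
        (\<exists>VT ET. is_tree_in V E VT ET \<and> S \<subseteq> VT \<and> proper_edges c ET))"

definition px3 :: "'a set \<Rightarrow> 'a set set \<Rightarrow> nat" where
  "px3 V E = (LEAST k. \<exists>c. c ` E \<subseteq> {..<k} \<and> three_proper_coloring V E c)"

(* rK_1 \<or> K_3 on vertex set {0..<r+3}: vertices < r independent, r, r+1, r+2 a triangle,
   all edges between the two parts. *)
definition rK1_join_K3_V :: "nat \<Rightarrow> nat set" where
  "rK1_join_K3_V r = {0..<r + 3}"

definition rK1_join_K3_E :: "nat \<Rightarrow> nat set set" where
  "rK1_join_K3_E r = {{u, v} | u v. u \<in> {0..<r + 3} \<and> v \<in> {0..<r + 3} \<and> u \<noteq> v \<and> (r \<le> u \<or> r \<le> v)}"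

end

theory Submission
  imports Defs "HOL-Library.FuncSet"
begin

(* Upper bound: in a threshold graph the neighbours of a vertex of minimum weight are adjacent
   to every other vertex, and minimum degree 3 provides three such universal vertices a, b, c.
   Any three vertices are then covered by the tree consisting of the edges ac, bc and one pendant
   edge from each chosen non-hub vertex to its own hub, and this tree is properly 3-coloured.

   Lower bound: a proper tree whose edges use only two colours has maximum degree 2, so it is a
   path or a cycle and has at most two leaves.  In rK1 \<or> K3 with r \<ge> 17 = 2 \<cdot> 2^3 + 1, three
   independent vertices x, y, z see the triangle in the same colour pattern.  In a proper tree
   through them no two of x, y, z can share a neighbour, so their neighbourhoods are disjoint
   non-empty subsets of the triangle: all three are leaves, a contradiction. *)

definition neighbours :: "'a set \<Rightarrow> 'a set set \<Rightarrow> 'a \<Rightarrow> 'a set" where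
  "neighbours V E v = {u \<in> V. {u, v} \<in> E}"

lemma degree_eq_card_neighbours: "degree V E v = card (neighbours V E v)"
  by (simp add: degree_def neighbours_def)

lemma neighbours_sym: "u \<in> V \<Longrightarrow> v \<in> V \<Longrightarrow> u \<in> neighbours V E v \<longleftrightarrow> v \<in> neighbours V E u"
  by (auto simp: neighbours_def insert_commute)

lemma graph_connected_closed_set:
  assumes "graph_connected V E" "x \<in> V" "x \<in> D"
    and "\<And>u. u \<in> D \<Longrightarrow> neighbours V E u \<subseteq> D"
  shows "V \<subseteq> D"
proof
  fix v assume "v \<in> V"
  with assms(1,2) have "(x, v) \<in> (adj_rel V E)\<^sup>*"
    by (simp add: graph_connected_def)
  then show "v \<in> D"
  proof (induction rule: rtrancl_induct)
    case (step u w)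
    then have "w \<in> neighbours V E u"
      by (auto simp: adj_rel_def neighbours_def insert_commute)
    with step.IH assms(4) show ?case by blast
  qed (fact assms(3))
qed

lemma graph_connected_neighbours_nonempty:
  assumes "graph_connected V E" "v \<in> V" "w \<in> V" "w \<noteq> v"
  shows "neighbours V E v \<noteq> {}"
  using graph_connected_closed_set[OF assms(1,2), of "{v}"] assms(3,4) by blast

lemma graph_connected_remove_leaf:
  assumes conn: "graph_connected V E" and leaf: "neighbours V E x \<subseteq> {a}"
    and nonempty: "V - {x} \<noteq> {}"
  shows "graph_connected (V - {x}) {e \<in> E. x \<notin> e}"
proof -
  \<comment> \<open>A walk through the leaf x enters and leaves it via a, so it can be short-cut at a.\<close>
  let ?R' = "adj_rel (V - {x}) {e \<in> E. x \<notin> e}"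
  have reach: "(u, if w = x then a else w) \<in> ?R'\<^sup>*"
    if "(u, w) \<in> (adj_rel V E)\<^sup>*" "u \<noteq> x" for u w
    using that(1)
  proof (induction rule: rtrancl_induct)
    case base
    then show ?case using \<open>u \<noteq> x\<close> by simp
  next
    case (step w w')
    then have "w \<in> V" "w' \<in> V" "{w, w'} \<in> E" by (auto simp: adj_rel_def)
    consider "w' = x" | "w = x" "w' \<noteq> x" | "w \<noteq> x" "w' \<noteq> x" by blast
    then show ?case
    proof cases
      case 1
      then have "w = a" using leaf \<open>w \<in> V\<close> \<open>{w, w'} \<in> E\<close> by (auto simp: neighbours_def)
      then show ?thesis using step.IH 1 by (simp split: if_splits)
    next
      case 2
      then have "w' = a" using leaf \<open>w' \<in> V\<close> \<open>{w, w'} \<in> E\<close>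
        by (auto simp: neighbours_def insert_commute)
      then show ?thesis using step.IH 2 by simp
    next
      case 3
      then have "(w, w') \<in> ?R'" using \<open>w \<in> V\<close> \<open>w' \<in> V\<close> \<open>{w, w'} \<in> E\<close>
        by (simp add: adj_rel_def)
      then show ?thesis using step.IH 3 by simp
    qed
  qed
  show ?thesis
    unfolding graph_connected_def
  proof (intro conjI ballI)
    fix u v assume "u \<in> V - {x}" "v \<in> V - {x}"
    with conn have "(u, v) \<in> (adj_rel V E)\<^sup>*" by (simp add: graph_connected_def)
    with reach[of u v] \<open>u \<in> V - {x}\<close> \<open>v \<in> V - {x}\<close> show "(u, v) \<in> ?R'\<^sup>*" by simp
  qed (fact nonempty)
qed

lemma graph_connected_by_centre:
  assumes "c \<in> V" and reach: "\<And>u. u \<in> V \<Longrightarrow> (c, u) \<in> (adj_rel V E)\<^sup>*"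
  shows "graph_connected V E"
proof -
  have "sym ((adj_rel V E)\<^sup>*)"
    by (rule sym_rtrancl) (auto simp: sym_def adj_rel_def insert_commute)
  then show ?thesis
    using assms unfolding graph_connected_def by (meson empty_iff rtrancl_trans symD)
qed

lemma connected_max_degree_2_no_three_leaves:
  assumes "finite V" "graph_connected V E" "\<forall>v\<in>V. degree V E v \<le> 2"
    and "x \<in> V" "y \<in> V" "z \<in> V" "x \<noteq> y" "x \<noteq> z" "y \<noteq> z"
    and "degree V E x = 1" "degree V E y = 1" "degree V E z = 1"
  shows False
  using assms
  \<comment> \<open>Deleting the leaf x leaves a smaller connected graph in which its neighbour is a leaf.\<close>
proof (induction "card V" arbitrary: V E x y z rule: less_induct)
  case less
  let ?N = "neighbours V E"
  have finite_N: "finite (?N v)" for v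
    using less.prems(1) by (simp add: neighbours_def)
  obtain a where Nx: "?N x = {a}"
    using less.prems(10) by (auto simp: degree_eq_card_neighbours card_1_singleton_iff)
  then have "a \<in> V" "x \<in> ?N a"
    using less.prems(4) by (auto simp: neighbours_def insert_commute)
  show False
  proof (cases "?N a \<subseteq> {x}")
    case True
    have "V \<subseteq> {x, a}"
      by (rule graph_connected_closed_set[OF less.prems(2,4)]) (use Nx True in auto)
    with less.prems(5-9) show False by auto
  next
    case False
    then obtain p where p: "p \<in> ?N a" "p \<noteq> x" by auto
    have "a \<noteq> x" using False Nx by auto
    have "card {x, p} \<le> card (?N a)"
      using p \<open>x \<in> ?N a\<close> finite_N by (intro card_mono) auto
    then have a_not_leaf: "2 \<le> card (?N a)" using p(2) by simp
    then have "a \<noteq> y" "a \<noteq> z"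
      using less.prems(11,12) by (auto simp: degree_eq_card_neighbours)
    then have "x \<notin> ?N y" "x \<notin> ?N z"
      using Nx neighbours_sym[of x V y E] neighbours_sym[of x V z E] less.prems(4-6) by auto
    define V' where "V' = V - {x}"
    define E' where "E' = {e \<in> E. x \<notin> e}"
    have N': "neighbours V' E' v = ?N v - {x}" if "v \<noteq> x" for v
      using that by (auto simp: V'_def E'_def neighbours_def)
    show False
    proof (rule less.hyps)
      show "card V' < card V" unfolding V'_def by (rule card_Diff1_less[OF less.prems(1,4)])
      show "finite V'" using less.prems(1) by (simp add: V'_def)
      show "graph_connected V' E'"
        unfolding V'_def E'_def
        by (rule graph_connected_remove_leaf) (use less.prems(2,5,7) Nx in auto)
      show "\<forall>v\<in>V'. degree V' E' v \<le> 2"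
      proof
        fix v assume "v \<in> V'"
        then have "card (neighbours V' E' v) \<le> card (?N v)"
          using N' finite_N by (auto simp: V'_def intro: card_mono)
        then show "degree V' E' v \<le> 2"
          using less.prems(3) \<open>v \<in> V'\<close> by (auto simp: V'_def degree_eq_card_neighbours)
      qed
      show "a \<in> V'" "y \<in> V'" "z \<in> V'"
        using \<open>a \<in> V\<close> \<open>a \<noteq> x\<close> less.prems(5-8) by (auto simp: V'_def)
      show "a \<noteq> y" "a \<noteq> z" "y \<noteq> z" by fact+
      show "degree V' E' a = 1"
      proof -
        have "card (?N a) \<le> 2" using less.prems(3) \<open>a \<in> V\<close> by (simp add: degree_eq_card_neighbours)
        then show ?thesis
          using N'[OF \<open>a \<noteq> x\<close>] \<open>x \<in> ?N a\<close> finite_N a_not_leaf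
          by (simp add: degree_eq_card_neighbours)
      qed
      show "degree V' E' y = 1" "degree V' E' z = 1"
        using N' \<open>x \<notin> ?N y\<close> \<open>x \<notin> ?N z\<close> less.prems(7,8,11,12)
        by (auto simp: degree_eq_card_neighbours)
    qed
  qed
qed

lemma not_has_cycle_by_rank:
  fixes f :: "'a \<Rightarrow> nat"
  assumes unique_up: "\<And>v u w. {v, u} \<in> E \<Longrightarrow> {v, w} \<in> E \<Longrightarrow> u \<noteq> v \<Longrightarrow> w \<noteq> v
      \<Longrightarrow> f v \<le> f u \<Longrightarrow> f v \<le> f w \<Longrightarrow> u = w"
  shows "\<not> has_cycle V E"
proof
  \<comment> \<open>A vertex of minimum rank on a cycle has two distinct neighbours of larger or equal rank.\<close>
  assume "has_cycle V E"
  then obtain vs where len: "3 \<le> length vs" and dist: "distinct vs"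
    and edge: "\<And>i. i < length vs \<Longrightarrow> {vs ! i, vs ! ((i + 1) mod length vs)} \<in> E"
    unfolding has_cycle_def by blast
  define n where "n = length vs"
  obtain i where i: "i < n" and min: "\<And>j. j < n \<Longrightarrow> f (vs ! i) \<le> f (vs ! j)"
    using ex_has_least_nat[of "\<lambda>i. i < n" 0 "\<lambda>i. f (vs ! i)"] len by (fastforce simp: n_def)
  obtain p q where pq: "p < n" "q < n" "(p + 1) mod n = i" "q = (i + 1) mod n"
    and distinct_pq: "p \<noteq> q" "p \<noteq> i" "q \<noteq> i"
  proof -
    consider "i = 0" | "0 < i" "i + 1 < n" | "i + 1 = n" using i by linarith
    then show thesis
    proof cases
      case 1
      have "1 < n" "Suc (n - 1) = n" "n - 1 \<noteq> 1" using len by (auto simp: n_def)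
      then show thesis using that[of "n - 1" 1] 1 by simp
    next
      case 2
      then show thesis using that[of "i - 1" "i + 1"] by simp
    next
      case 3
      then have "1 < i" "i - 1 < n" "i - 1 \<noteq> i" using len by (auto simp: n_def)
      then show thesis using that[of "i - 1" 0] 3 by simp
    qed
  qed
  have "{vs ! i, vs ! p} \<in> E" "{vs ! i, vs ! q} \<in> E"
    using edge[of p] edge[of i] pq i by (simp_all add: n_def insert_commute)
  moreover have "vs ! p \<noteq> vs ! i" "vs ! q \<noteq> vs ! i" "vs ! p \<noteq> vs ! q"
    using dist distinct_pq pq(1,2) i by (simp_all add: n_def nth_eq_iff_index_eq)
  ultimately show False
    using unique_up min pq(1,2) by blast
qed

lemma proper_edges_at_vertex:
  assumes "proper_edges c E" "{u, v} \<in> E" "{w, v} \<in> E" "u \<noteq> w"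
  shows "c {u, v} \<noteq> c {w, v}"
proof -
  have "{u, v} \<noteq> {w, v}" using assms(4) by (auto simp: doubleton_eq_iff)
  moreover have "{u, v} \<inter> {w, v} \<noteq> {}" by blast
  ultimately show ?thesis using assms(1-3) unfolding proper_edges_def by metis
qed

lemma proper_edges_degree_le:
  assumes "proper_edges c E" "c ` E \<subseteq> {..<k}"
  shows "degree V E v \<le> k"
proof -
  have "inj_on (\<lambda>u. c {u, v}) (neighbours V E v)"
    using proper_edges_at_vertex[OF assms(1)] by (auto simp: inj_on_def neighbours_def)
  moreover have "(\<lambda>u. c {u, v}) ` neighbours V E v \<subseteq> {..<k}"
    using assms(2) by (auto simp: neighbours_def)
  ultimately have "card (neighbours V E v) \<le> card {..<k}"
    by (intro card_inj_on_le) auto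
  then show ?thesis by (simp add: degree_eq_card_neighbours)
qed

lemma px3_le:
  assumes "c ` E \<subseteq> {..<k}" "three_proper_coloring V E c"
  shows "px3 V E \<le> k"
  unfolding px3_def by (rule Least_le) (use assms in blast)

lemma px3_eqI:
  assumes "0 < k" "c ` E \<subseteq> {..<k}" "three_proper_coloring V E c"
    and "\<And>c'. c' ` E \<subseteq> {..<k - 1} \<Longrightarrow> three_proper_coloring V E c' \<Longrightarrow> False"
  shows "px3 V E = k"
  unfolding px3_def
proof (rule Least_equality)
  fix j assume "\<exists>c'. c' ` E \<subseteq> {..<j} \<and> three_proper_coloring V E c'"
  then show "k \<le> j" using assms(1,4) by (metis Suc_pred' lessThan_subset_iff not_less_eq_eq order_trans)
qed (use assms(2,3) in blast)

definition hub_colouring :: "'a \<Rightarrow> 'a \<Rightarrow> 'a \<Rightarrow> 'a set \<Rightarrow> nat" where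
  "hub_colouring a b c e =
     (if e = {b, c} then 0 else if e = {a, c} then 1 else if e = {a, b} then 2
      else if a \<in> e then 0 else if b \<in> e then 1 else 2)"

definition hub_tree_edges :: "'a \<Rightarrow> 'a \<Rightarrow> 'a \<Rightarrow> ('a \<Rightarrow> 'a) \<Rightarrow> 'a set \<Rightarrow> 'a set set" where
  "hub_tree_edges a b c g I = {{a, c}, {b, c}} \<union> (\<lambda>s. {s, g s}) ` I"

lemma hub_tree_is_tree:
  assumes hubs: "a \<in> V" "b \<in> V" "c \<in> V" "a \<noteq> b" "a \<noteq> c" "b \<noteq> c"
    and universal: "\<And>v h. v \<in> V \<Longrightarrow> h \<in> {a, b, c} \<Longrightarrow> v \<noteq> h \<Longrightarrow> {v, h} \<in> E"
    and I: "I \<subseteq> V - {a, b, c}" and g: "g ` I \<subseteq> {a, b, c}"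
  shows "is_tree_in V E ({a, b, c} \<union> I) (hub_tree_edges a b c g I)"
proof -
  let ?VT = "{a, b, c} \<union> I" and ?ET = "hub_tree_edges a b c g I"
  define rank where "rank v = (if v = c then 2 else if v = a \<or> v = b then 1 else 0 :: nat)" for v
  have up: "u = (if v = a \<or> v = b then c else g v)"
    if "{v, u} \<in> ?ET" "u \<noteq> v" "rank v \<le> rank u" for v u
  proof -
    from that(1) consider "{v, u} = {a, c}" | "{v, u} = {b, c}" | s where "s \<in> I" "{v, u} = {s, g s}"
      by (auto simp: hub_tree_edges_def)
    then show ?thesis
    proof cases
      case 3
      then have "s \<notin> {a, b, c}" "g s \<in> {a, b, c}" using I g by auto
      then show ?thesis using 3(2) that(3) hubs by (auto simp: doubleton_eq_iff rank_def)
    qed (use that(2,3) hubs in \<open>auto simp: doubleton_eq_iff rank_def\<close>)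
  qed
  have "\<not> has_cycle ?VT ?ET"
  proof (rule not_has_cycle_by_rank[of _ rank])
    fix v u u' assume "{v, u} \<in> ?ET" "{v, u'} \<in> ?ET" "u \<noteq> v" "u' \<noteq> v"
      "rank v \<le> rank u" "rank v \<le> rank u'"
    then show "u = u'" using up[of v u] up[of v u'] by simp
  qed
  moreover have "graph_connected ?VT ?ET"
  proof (rule graph_connected_by_centre)
    have hub_edges: "(c, a) \<in> adj_rel ?VT ?ET" "(c, b) \<in> adj_rel ?VT ?ET"
      by (auto simp: adj_rel_def hub_tree_edges_def insert_commute)
    fix u assume "u \<in> ?VT"
    then consider "u \<in> {a, b, c}" | "u \<in> I" by blast
    then show "(c, u) \<in> (adj_rel ?VT ?ET)\<^sup>*"
    proof cases
      case 1
      then show ?thesis using hub_edges by auto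
    next
      case 2
      then have "(c, g u) \<in> (adj_rel ?VT ?ET)\<^sup>*" using g hub_edges by auto
      moreover have "(g u, u) \<in> adj_rel ?VT ?ET"
        using 2 g by (auto simp: adj_rel_def hub_tree_edges_def insert_commute)
      ultimately show ?thesis by simp
    qed
  qed simp
  moreover have "{s, g s} \<in> E" if "s \<in> I" for s
    using universal[of s "g s"] that I g by auto
  then have "?ET \<subseteq> E" "\<forall>e\<in>?ET. e \<subseteq> ?VT"
    using universal hubs g by (auto simp: hub_tree_edges_def)
  ultimately show ?thesis
    using hubs I by (auto simp: is_tree_in_def)
qed

lemma hub_colouring_proper:
  assumes hubs: "a \<noteq> b" "a \<noteq> c" "b \<noteq> c"
    and I: "I \<inter> {a, b, c} = {}" and g: "g ` I \<subseteq> {a, b, c}" "inj_on g I"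
  shows "proper_edges (hub_colouring a b c) (hub_tree_edges a b c g I)"
proof -
  have pendant: "hub_colouring a b c {s, g s} = (if g s = a then 0 else if g s = b then 1 else 2)"
    if "s \<in> I" for s
    using that I g hubs by (auto simp: hub_colouring_def doubleton_eq_iff)
  have "hub_colouring a b c {a, c} = 1" "hub_colouring a b c {b, c} = 0"
    using hubs by (auto simp: hub_colouring_def doubleton_eq_iff)
  then show ?thesis
    unfolding proper_edges_def
  proof (intro ballI impI)
    fix e f assume "e \<in> hub_tree_edges a b c g I" "f \<in> hub_tree_edges a b c g I"
      and "e \<noteq> f \<and> e \<inter> f \<noteq> {}"
    then show "hub_colouring a b c e \<noteq> hub_colouring a b c f"
      using pendant I g hubs \<open>hub_colouring a b c {a, c} = 1\<close> \<open>hub_colouring a b c {b, c} = 0\<close>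
      by (auto simp: hub_tree_edges_def inj_on_def split: if_splits)
  qed
qed

lemma universal_triangle_three_proper_coloring:
  assumes hubs: "a \<in> V" "b \<in> V" "c \<in> V" "a \<noteq> b" "a \<noteq> c" "b \<noteq> c"
    and universal: "\<And>v h. v \<in> V \<Longrightarrow> h \<in> {a, b, c} \<Longrightarrow> v \<noteq> h \<Longrightarrow> {v, h} \<in> E"
  shows "three_proper_coloring V E (hub_colouring a b c)"
  unfolding three_proper_coloring_def
proof (intro allI impI)
  fix S assume S: "S \<subseteq> V" "card S = 3"
  define I where "I = S - {a, b, c}"
  have "finite S" using S(2) by (simp add: card_ge_0_finite)
  then have "card I \<le> card S" by (auto simp: I_def intro: card_mono)
  then have "card I \<le> card {a, b, c}" using S(2) hubs by simp
  then obtain g where g: "g ` I \<subseteq> {a, b, c}" "inj_on g I"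
    using card_le_inj[of I "{a, b, c}"] \<open>finite S\<close> by (auto simp: I_def)
  have "I \<subseteq> V - {a, b, c}" "I \<inter> {a, b, c} = {}" "S \<subseteq> {a, b, c} \<union> I"
    using S(1) by (auto simp: I_def)
  then show "\<exists>VT ET. is_tree_in V E VT ET \<and> S \<subseteq> VT \<and> proper_edges (hub_colouring a b c) ET"
    using hub_tree_is_tree[OF hubs universal _ g(1)] hub_colouring_proper[OF hubs(4-6) _ g]
    by blast
qed

(* A neighbour h of a vertex v0 of minimum weight satisfies w v + w h \<ge> w v0 + w h \<ge> t. *)
lemma threshold_graph_universal_neighbours:
  assumes "threshold_graph V E" "V \<noteq> {}"
  obtains v0 where "v0 \<in> V"
    "\<And>h v. h \<in> neighbours V E v0 \<Longrightarrow> v \<in> V \<Longrightarrow> v \<noteq> h \<Longrightarrow> {v, h} \<in> E"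
proof -
  obtain w :: "'a \<Rightarrow> real" and t
    where wt: "\<And>u v. u \<in> V \<Longrightarrow> v \<in> V \<Longrightarrow> u \<noteq> v \<Longrightarrow> {u, v} \<in> E \<longleftrightarrow> t \<le> w u + w v"
    and simple: "simple_graph V E"
    using assms(1) unfolding threshold_graph_def by blast
  have "finite V" using simple by (simp add: simple_graph_def)
  then have "Min (w ` V) \<in> w ` V" using assms(2) by simp
  then obtain v0 where v0: "v0 \<in> V" "w v0 = Min (w ` V)" by auto
  have w_min: "w v0 \<le> w v" if "v \<in> V" for v
    using v0(2) \<open>finite V\<close> that by simp
  have "{v, h} \<in> E" if h: "h \<in> neighbours V E v0" and v: "v \<in> V" "v \<noteq> h" for h v
  proof -
    have "h \<in> V" "{h, v0} \<in> E" using h by (auto simp: neighbours_def)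
    moreover have "h \<noteq> v0"
      using \<open>{h, v0} \<in> E\<close> simple by (auto simp: simple_graph_def doubleton_eq_iff)
    ultimately have "t \<le> w h + w v0" using wt v0(1) by blast
    then show ?thesis using wt[OF v(1) \<open>h \<in> V\<close> v(2)] w_min[OF v(1)] by simp
  qed
  then show thesis using that v0(1) by blast
qed

lemma threshold_graph_px3_le_3:
  assumes "threshold_graph V E" "V \<noteq> {}" "min_degree_ge V E 3"
  shows "px3 V E \<le> 3"
proof -
  obtain v0 where v0: "v0 \<in> V"
    and universal: "\<And>h v. h \<in> neighbours V E v0 \<Longrightarrow> v \<in> V \<Longrightarrow> v \<noteq> h \<Longrightarrow> {v, h} \<in> E"
    using threshold_graph_universal_neighbours[OF assms(1,2)] by blast
  have "3 \<le> card (neighbours V E v0)"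
    using assms(3) v0 by (simp add: min_degree_ge_def degree_eq_card_neighbours)
  then obtain a b c where abc: "{a, b, c} \<subseteq> neighbours V E v0" "a \<noteq> b" "a \<noteq> c" "b \<noteq> c"
    by (metis obtain_subset_with_card_n card_3_iff)
  then have "a \<in> V" "b \<in> V" "c \<in> V" by (auto simp: neighbours_def)
  then have "three_proper_coloring V E (hub_colouring a b c)"
    using abc universal by (intro universal_triangle_three_proper_coloring) auto
  moreover have "hub_colouring a b c ` E \<subseteq> {..<3}"
    by (auto simp: hub_colouring_def)
  ultimately show ?thesis by (rule px3_le[rotated])
qed

lemma rK1_join_K3_E_iff:
  "{u, v} \<in> rK1_join_K3_E r \<longleftrightarrow> u \<noteq> v \<and> u < r + 3 \<and> v < r + 3 \<and> (r \<le> u \<or> r \<le> v)"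
  unfolding rK1_join_K3_E_def by (auto simp: doubleton_eq_iff)

lemma rK1_join_K3_no_proper_tree_through_alike_vertices:
  assumes tree: "is_tree_in (rK1_join_K3_V r) (rK1_join_K3_E r) VT ET"
    and proper: "proper_edges c ET" and two_colours: "c ` ET \<subseteq> {..<2}"
    and in_tree: "{x, y, z} \<subseteq> VT" and independent: "x < r" "y < r" "z < r"
    and distinct: "x \<noteq> y" "x \<noteq> z" "y \<noteq> z"
    and alike: "\<forall>k\<in>{r..<r + 3}. c {y, k} = c {x, k} \<and> c {z, k} = c {x, k}"
  shows False
proof -
  let ?N = "neighbours VT ET"
  have VT: "VT \<subseteq> {0..<r + 3}" and ET: "ET \<subseteq> rK1_join_K3_E r"
    and conn: "graph_connected VT ET"
    using tree by (auto simp: is_tree_in_def rK1_join_K3_V_def)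
  have "finite VT" using VT finite_subset by blast
  then have finite_N: "finite (?N u)" for u by (simp add: neighbours_def)
  have N_hubs: "?N u \<subseteq> {r..<r + 3}" if "u < r" for u
    using that ET by (auto simp: neighbours_def rK1_join_K3_E_iff)
  have alike_x: "c {u, k} = c {x, k}" if "u \<in> {x, y, z}" "k \<in> {r..<r + 3}" for u k
    using alike that by auto
  have disjoint: "?N u \<inter> ?N w = {}" if "u \<in> {x, y, z}" "w \<in> {x, y, z}" "u \<noteq> w" for u w
  proof (intro equalityI subsetI)
    fix k assume k: "k \<in> ?N u \<inter> ?N w"
    have "k \<in> {r..<r + 3}" using k N_hubs that independent by blast
    then have "c {u, k} = c {w, k}" using alike_x that(1,2) by metis
    moreover have "{u, k} \<in> ET" "{w, k} \<in> ET" using k by (auto simp: neighbours_def insert_commute)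
    ultimately show "k \<in> {}"
      using proper_edges_at_vertex[OF proper, of u k w] \<open>u \<noteq> w\<close> by simp
  qed simp
  have nonempty: "?N u \<noteq> {}" if "u \<in> {x, y, z}" for u
    using graph_connected_neighbours_nonempty[OF conn] in_tree distinct that by blast
  have "card (?N x) + card (?N y) + card (?N z) = card (?N x \<union> ?N y \<union> ?N z)"
    using disjoint[of x y] disjoint[of x z] disjoint[of y z] distinct finite_N
    by (simp add: card_Un_disjoint Int_Un_distrib2)
  also have "\<dots> \<le> card {r..<r + 3}"
    using N_hubs independent by (intro card_mono) auto
  finally have "card (?N x) + card (?N y) + card (?N z) \<le> 3" by simp
  moreover have "1 \<le> card (?N u)" if "u \<in> {x, y, z}" for u
    using nonempty[OF that] finite_N by (simp add: Suc_le_eq card_gt_0_iff)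
  then have "1 \<le> card (?N x)" "1 \<le> card (?N y)" "1 \<le> card (?N z)" by simp_all
  ultimately have leaves: "degree VT ET x = 1" "degree VT ET y = 1" "degree VT ET z = 1"
    unfolding degree_eq_card_neighbours by linarith+
  show False
    using connected_max_degree_2_no_three_leaves[OF \<open>finite VT\<close> conn _ _ _ _ distinct]
      proper_edges_degree_le[OF proper two_colours] in_tree leaves by auto
qed

lemma rK1_join_K3_no_two_colouring:
  assumes "17 \<le> r" and colours: "c ` rK1_join_K3_E r \<subseteq> {..<2}"
    and three_proper: "three_proper_coloring (rK1_join_K3_V r) (rK1_join_K3_E r) c"
  shows False
proof -
  define K where "K = {r..<r + 3}"
  define pattern where "pattern i = restrict (\<lambda>k. c {i, k}) K" for i
  have "pattern \<in> {..<r} \<rightarrow> (K \<rightarrow>\<^sub>E {..<2})"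
    using colours by (auto simp: pattern_def K_def rK1_join_K3_E_iff image_subset_iff)
  moreover have "card (K \<rightarrow>\<^sub>E {..<2::nat}) = 8"
    by (simp add: card_funcsetE K_def)
  ultimately obtain P where "r \<le> card (pattern -` {P} \<inter> {..<r}) * 8"
    using pigeonhole_card[of pattern "{..<r}" "K \<rightarrow>\<^sub>E {..<2}"]
      card_gt_0_iff[of "K \<rightarrow>\<^sub>E {..<2::nat}"] by auto
  then have "3 \<le> card (pattern -` {P} \<inter> {..<r})" using \<open>17 \<le> r\<close> by linarith
  then obtain T where T: "T \<subseteq> pattern -` {P} \<inter> {..<r}" "card T = 3"
    by (rule obtain_subset_with_card_n)
  then obtain x y z where xyz: "T = {x, y, z}" "x \<noteq> y" "x \<noteq> z" "y \<noteq> z"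
    by (auto simp: card_3_iff)
  then have "{x, y, z} \<subseteq> rK1_join_K3_V r" "card {x, y, z} = 3"
    using T by (auto simp: rK1_join_K3_V_def)
  then obtain VT ET where tree: "is_tree_in (rK1_join_K3_V r) (rK1_join_K3_E r) VT ET"
    and in_tree: "{x, y, z} \<subseteq> VT" and proper: "proper_edges c ET"
    using three_proper unfolding three_proper_coloring_def by blast
  have colours_ET: "c ` ET \<subseteq> {..<2}"
    using tree colours by (auto simp: is_tree_in_def)
  have same: "pattern y = pattern x" "pattern z = pattern x"
    using T xyz(1) by auto
  have alike: "\<forall>k\<in>K. c {y, k} = c {x, k} \<and> c {z, k} = c {x, k}"
  proof
    fix k assume "k \<in> K"
    then show "c {y, k} = c {x, k} \<and> c {z, k} = c {x, k}"
      using fun_cong[OF same(1), of k] fun_cong[OF same(2), of k] by (simp add: pattern_def)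
  qed
  have "x < r" "y < r" "z < r" using T xyz(1) by auto
  then show False
    using rK1_join_K3_no_proper_tree_through_alike_vertices[OF tree proper colours_ET in_tree]
      xyz(2-4) alike by (simp add: K_def)
qed

lemma rK1_join_K3_px3:
  assumes "17 \<le> r"
  shows "px3 (rK1_join_K3_V r) (rK1_join_K3_E r) = 3"
proof (rule px3_eqI)
  show "three_proper_coloring (rK1_join_K3_V r) (rK1_join_K3_E r) (hub_colouring r (r + 1) (r + 2))"
    by (rule universal_triangle_three_proper_coloring)
      (auto simp: rK1_join_K3_V_def rK1_join_K3_E_iff)
  show "hub_colouring r (r + 1) (r + 2) ` rK1_join_K3_E r \<subseteq> {..<3}"
    by (auto simp: hub_colouring_def)
qed (use rK1_join_K3_no_two_colouring[OF assms] in auto)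

theorem corollary3p5:
  shows "(\<forall>(V :: 'a set) E. simple_graph V E \<and> threshold_graph V E \<and> graph_connected V E
            \<and> min_degree_ge V E 3 \<longrightarrow> px3 V E \<le> 3)
       \<and> (\<forall>r :: nat. r \<ge> 17 \<longrightarrow> px3 (rK1_join_K3_V r) (rK1_join_K3_E r) = 3)"
  using threshold_graph_px3_le_3 rK1_join_K3_px3 by (auto simp: graph_connected_def)

end
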